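(* Fix a trial $r$ and assume the surrogate satisfies causal necessity in trial $r$, i.e. $ACE_{ss,r}=ACE_{\bar{s}\bar{s},r}=0$. (i) Under monotonicity ($P(U=\bar{s}s\mid R=r)=0$) and $\pi_{s\bar{s},r}>0$: $ACE^Y_r=ACE^S_r\times ACE_{s\bar{s},r}$. (ii) Without monotonicity, assume $\pi_{s\bar{s},r}>0$, $\pi_{\bar{s}s,r}>0$ and $ACE^S_r>0$. If $ACE_{s\bar{s},r}+ACE_{\bar{s}s,r}\ge 0$, then $$ACE^S_r\, ACE_{s\bar{s},r}\le ACE^Y_r\le \tfrac12(ACE_{s\bar{s},r}+ACE_{\bar{s}s,r})+\tfrac12 ACE^S_r\,(ACE_{s\bar{s},r}-ACE_{\bar{s}s,r}),$$ and otherwise $$\tfrac12(ACE_{s\bar{s},r}+ACE_{\bar{s}s,r})+\tfrac12 ACE^S_r\,(ACE_{s\bar{s},r}-ACE_{\bar{s}s,r})\le ACE^Y_r\le ACE^S_r\, ACE_{s\bar{s},r}.$$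
   Context: A unit has trial $R$, treatment $Z\in\{0,1\}$, and binary potential surrogate and endpoint $S(z),Y(z)$, $z=0,1$. $U=(S(1),S(0))$ with values $(1,1),(1,0),(0,1),(0,0)$ labeled $ss,s\bar{s},\bar{s}s,\bar{s}\bar{s}$; $\pi_{ur}=P(U=u\mid R=r)$. For strata with $\pi_{ur}>0$, $ACE_{ur}=E\{Y(1)-Y(0)\mid U=u,R=r\}$; causal necessity is understood as $E\{(Y(1)-Y(0))1\{U=u\}\mid R=r\}=0$ for $u=ss,\bar{s}\bar{s}$ (equivalently $ACE_{ur}=0$ whenever $\pi_{ur}>0$). $ACE^S_r=E\{S(1)-S(0)\mid R=r\}$ and $ACE^Y_r=E\{Y(1)-Y(0)\mid R=r\}$. *)

theory Defs
  imports "HOL-Probability.Probability"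
begin

definition cond_ev_exp :: "'a measure \<Rightarrow> 'a set \<Rightarrow> ('a \<Rightarrow> real) \<Rightarrow> real" where
  "cond_ev_exp M A X = (\<integral>w. indicator A w * X w \<partial>M) / measure M A"

definition trial_ev :: "'a measure \<Rightarrow> ('a \<Rightarrow> 'r) \<Rightarrow> 'r \<Rightarrow> 'a set" where
  "trial_ev M R r = {w \<in> space M. R w = r}"

text \<open>Principal stratum U = (S(1), S(0)); True = s, False = s-bar.\<close>
definition stratum_ev :: "'a measure \<Rightarrow> ('a \<Rightarrow> 'r) \<Rightarrow> ('a \<Rightarrow> bool) \<Rightarrow> ('a \<Rightarrow> bool) \<Rightarrow> bool \<times> bool \<Rightarrow> 'r \<Rightarrow> 'a set" where
  "stratum_ev M R S1 S0 u r = {w \<in> space M. R w = r \<and> (S1 w, S0 w) = u}"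

definition pi_s :: "'a measure \<Rightarrow> ('a \<Rightarrow> 'r) \<Rightarrow> ('a \<Rightarrow> bool) \<Rightarrow> ('a \<Rightarrow> bool) \<Rightarrow> bool \<times> bool \<Rightarrow> 'r \<Rightarrow> real" where
  "pi_s M R S1 S0 u r = measure M (stratum_ev M R S1 S0 u r) / measure M (trial_ev M R r)"

definition ACE_stratum :: "'a measure \<Rightarrow> ('a \<Rightarrow> 'r) \<Rightarrow> ('a \<Rightarrow> bool) \<Rightarrow> ('a \<Rightarrow> bool) \<Rightarrow> ('a \<Rightarrow> bool) \<Rightarrow> ('a \<Rightarrow> bool) \<Rightarrow> bool \<times> bool \<Rightarrow> 'r \<Rightarrow> real" where
  "ACE_stratum M R S1 S0 Y1 Y0 u r =
     cond_ev_exp M (stratum_ev M R S1 S0 u r) (\<lambda>w. of_bool (Y1 w) - of_bool (Y0 w))"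

definition ACE_S :: "'a measure \<Rightarrow> ('a \<Rightarrow> 'r) \<Rightarrow> ('a \<Rightarrow> bool) \<Rightarrow> ('a \<Rightarrow> bool) \<Rightarrow> 'r \<Rightarrow> real" where
  "ACE_S M R S1 S0 r = cond_ev_exp M (trial_ev M R r) (\<lambda>w. of_bool (S1 w) - of_bool (S0 w))"

definition ACE_Y :: "'a measure \<Rightarrow> ('a \<Rightarrow> 'r) \<Rightarrow> ('a \<Rightarrow> bool) \<Rightarrow> ('a \<Rightarrow> bool) \<Rightarrow> 'r \<Rightarrow> real" where
  "ACE_Y M R Y1 Y0 r = cond_ev_exp M (trial_ev M R r) (\<lambda>w. of_bool (Y1 w) - of_bool (Y0 w))"

definition causal_necessity :: "'a measure \<Rightarrow> ('a \<Rightarrow> 'r) \<Rightarrow> ('a \<Rightarrow> bool) \<Rightarrow> ('a \<Rightarrow> bool) \<Rightarrow> ('a \<Rightarrow> bool) \<Rightarrow> ('a \<Rightarrow> bool) \<Rightarrow> 'r \<Rightarrow> bool" where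
  "causal_necessity M R S1 S0 Y1 Y0 r \<longleftrightarrow>
     (\<forall>u \<in> {(True, True), (False, False)}.
        cond_ev_exp M (trial_ev M R r)
          (\<lambda>w. (of_bool (Y1 w) - of_bool (Y0 w)) * of_bool ((S1 w, S0 w) = u)) = 0)"

end

(*
  Within trial r the four principal strata partition the event R = r, so the law of total
  expectation gives ACE^Y_r = \<Sum>_u \<pi>_ur ACE_ur and ACE^S_r = \<pi>_{s s-bar} - \<pi>_{s-bar s}.
  Causal necessity removes the ss and s-bar s-bar terms, leaving ACE^Y_r = x a + z b with
  x = \<pi>_{s s-bar}, z = \<pi>_{s-bar s}, x + z \<le> 1 and a, b the two stratum effects. Then
  ACE^Y_r - ACE^S_r a = z (a + b) and the proposed upper bound minus ACE^Y_r is (1 - x - z)(a + b)/2,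
  so the sign of a + b orders all three quantities; under monotonicity z = 0 and the lower bound
  is attained.
*)

theory Submission
  imports Defs
begin

lemma cond_ev_exp_cong:
  assumes "\<And>w. w \<in> A \<Longrightarrow> f w = g w"
  shows "cond_ev_exp M A f = cond_ev_exp M A g"
  unfolding cond_ev_exp_def
  by (rule arg_cong[where f = "\<lambda>x. x / measure M A"], rule Bochner_Integration.integral_cong)
     (auto simp: assms indicator_def)

lemma (in finite_measure) cond_ev_exp_const:
  assumes "A \<in> sets M"
  shows "cond_ev_exp M A (\<lambda>_. c) = (if measure M A = 0 then 0 else c)"
  using assms by (simp add: cond_ev_exp_def)

lemma (in finite_measure) measure_mult_cond_ev_exp:
  assumes "A \<in> sets M"
  shows "measure M A * cond_ev_exp M A f = (\<integral>w. indicator A w * f w \<partial>M)"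
proof (cases "measure M A = 0")
  case True
  then have "A \<in> null_sets M"
    using assms by (simp add: null_sets_def emeasure_eq_measure)
  then have "AE w in M. indicator A w * f w = 0"
    by (rule AE_mp[OF AE_not_in]) (auto intro!: AE_I2)
  with True show ?thesis
    by (simp add: integral_eq_zero_AE)
qed (simp add: cond_ev_exp_def)

lemma (in finite_measure) cond_ev_exp_partition:
  assumes "finite I" "disjoint_family_on A I" "\<And>i. i \<in> I \<Longrightarrow> A i \<in> sets M"
    and "integrable M f"
  shows "cond_ev_exp M (\<Union>i\<in>I. A i) f
           = (\<Sum>i\<in>I. measure M (A i) / measure M (\<Union>i\<in>I. A i) * cond_ev_exp M (A i) f)"
proof -
  have "(\<integral>w. indicator (\<Union>i\<in>I. A i) w * f w \<partial>M) = (\<integral>w. (\<Sum>i\<in>I. indicator (A i) w * f w) \<partial>M)"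
    using assms(1,2) by (simp add: indicator_UN_disjoint sum_distrib_right)
  also have "\<dots> = (\<Sum>i\<in>I. measure M (A i) * cond_ev_exp M (A i) f)"
    using assms(3,4)
    by (simp add: measure_mult_cond_ev_exp, intro Bochner_Integration.integral_sum)
       (simp add: integrable_real_mult_indicator mult.commute)
  finally show ?thesis
    by (simp add: cond_ev_exp_def[of M "\<Union>i\<in>I. A i"] sum_divide_distrib)
qed

lemma trial_ev_eq_UN_strata: "trial_ev M R r = (\<Union>u. stratum_ev M R S1 S0 u r)"
  by (auto simp: trial_ev_def stratum_ev_def)

lemma disjoint_family_strata: "disjoint_family (\<lambda>u. stratum_ev M R S1 S0 u r)"
  by (auto simp: disjoint_family_on_def stratum_ev_def)

lemma measurable_Pair_count_space:
  fixes f :: "'a \<Rightarrow> 'b::countable" and g :: "'a \<Rightarrow> 'c::countable"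
  assumes f: "f \<in> M \<rightarrow>\<^sub>M count_space UNIV" and g: "g \<in> M \<rightarrow>\<^sub>M count_space UNIV"
  shows "(\<lambda>w. (f w, g w)) \<in> M \<rightarrow>\<^sub>M count_space UNIV"
proof (subst measurable_count_space_eq2_countable, intro conjI ballI)
  fix p :: "'b \<times> 'c"
  have "(\<lambda>w. (f w, g w)) -` {p} \<inter> space M = (f -` {fst p} \<inter> space M) \<inter> (g -` {snd p} \<inter> space M)"
    by (cases p) auto
  then show "(\<lambda>w. (f w, g w)) -` {p} \<inter> space M \<in> sets M"
    using measurable_sets[OF f] measurable_sets[OF g] by auto
qed auto

lemma (in finite_measure) integrable_bounded:
  fixes f :: "'a \<Rightarrow> real"
  assumes "f \<in> borel_measurable M" "\<And>w. \<bar>f w\<bar> \<le> B"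
  shows "integrable M f"
  using assms by (intro integrable_const_bound[where B = B]) auto

lemma sum_UNIV_bool_pair:
  "(\<Sum>u\<in>UNIV. f u) = f (True, True) + f (True, False) + f (False, True) + f (False, False)"
  by (simp add: UNIV_bool ac_simps flip: UNIV_Times_UNIV)

lemma pi_s_nonneg: "0 \<le> pi_s M R S1 S0 u r"
  by (simp add: pi_s_def)

locale trial_strata = prob_space M for M :: "'a measure" +
  fixes R :: "'a \<Rightarrow> 'r" and r :: 'r and S1 S0 :: "'a \<Rightarrow> bool"
  assumes trial_sets: "{w \<in> space M. R w = r} \<in> sets M"
    and S1_measurable[measurable]: "S1 \<in> measurable M (count_space UNIV)"
    and S0_measurable[measurable]: "S0 \<in> measurable M (count_space UNIV)"
begin

lemma stratum_ev_sets: "stratum_ev M R S1 S0 u r \<in> sets M"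
proof -
  have "stratum_ev M R S1 S0 u r = {w \<in> space M. R w = r} \<inter> {w \<in> space M. S1 w = fst u \<and> S0 w = snd u}"
    by (cases u) (auto simp: stratum_ev_def)
  with trial_sets show ?thesis by simp
qed

lemma cond_ev_exp_trial_strata:
  assumes "integrable M f"
  shows "cond_ev_exp M (trial_ev M R r) f
           = (\<Sum>u\<in>UNIV. pi_s M R S1 S0 u r * cond_ev_exp M (stratum_ev M R S1 S0 u r) f)"
proof -
  have "cond_ev_exp M (\<Union>u. stratum_ev M R S1 S0 u r) f
          = (\<Sum>u\<in>UNIV. measure M (stratum_ev M R S1 S0 u r) / measure M (\<Union>u. stratum_ev M R S1 S0 u r)
                         * cond_ev_exp M (stratum_ev M R S1 S0 u r) f)"
    by (rule cond_ev_exp_partition) (simp_all add: disjoint_family_strata stratum_ev_sets assms)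
  then show ?thesis
    by (simp add: pi_s_def trial_ev_eq_UN_strata[symmetric])
qed

lemma pi_s_mult_cond_ev_exp_const_on_stratum:
  assumes "\<And>w. w \<in> stratum_ev M R S1 S0 u r \<Longrightarrow> f w = c"
  shows "pi_s M R S1 S0 u r * cond_ev_exp M (stratum_ev M R S1 S0 u r) f = pi_s M R S1 S0 u r * c"
  using cond_ev_exp_cong[of "stratum_ev M R S1 S0 u r" f "\<lambda>_. c" M] assms
  by (simp add: cond_ev_exp_const stratum_ev_sets pi_s_def)

lemma sum_pi_s_le_one: "(\<Sum>u\<in>UNIV. pi_s M R S1 S0 u r) \<le> 1"
proof -
  have "(\<Sum>u\<in>UNIV. pi_s M R S1 S0 u r) = cond_ev_exp M (trial_ev M R r) (\<lambda>_. 1)"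
    by (simp add: cond_ev_exp_trial_strata pi_s_mult_cond_ev_exp_const_on_stratum)
  also have "\<dots> \<le> 1"
    using trial_sets by (simp add: cond_ev_exp_const trial_ev_def)
  finally show ?thesis .
qed

lemma ACE_S_eq_pi_s_diff:
  "ACE_S M R S1 S0 r = pi_s M R S1 S0 (True, False) r - pi_s M R S1 S0 (False, True) r"
proof -
  have integrable: "integrable M (\<lambda>w. of_bool (S1 w) - of_bool (S0 w) :: real)"
    by (rule integrable_bounded[where B = 1]) auto
  have strata: "pi_s M R S1 S0 u r * cond_ev_exp M (stratum_ev M R S1 S0 u r) (\<lambda>w. of_bool (S1 w) - of_bool (S0 w))
                   = pi_s M R S1 S0 u r * (of_bool (fst u) - of_bool (snd u))" for u
    by (rule pi_s_mult_cond_ev_exp_const_on_stratum) (auto simp: stratum_ev_def)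
  show ?thesis
    by (simp add: ACE_S_def cond_ev_exp_trial_strata[OF integrable] strata sum_UNIV_bool_pair)
qed

end

locale trial_potential_outcomes = trial_strata +
  fixes Y1 Y0 :: "'a \<Rightarrow> bool"
  assumes Y1_measurable[measurable]: "Y1 \<in> measurable M (count_space UNIV)"
    and Y0_measurable[measurable]: "Y0 \<in> measurable M (count_space UNIV)"
begin

lemmas stratum_measurable[measurable] = measurable_Pair_count_space[OF S1_measurable S0_measurable]

lemma integrable_effect_indicator_stratum:
  "integrable M (\<lambda>w. (of_bool (Y1 w) - of_bool (Y0 w)) * of_bool ((S1 w, S0 w) = u) :: real)"
  by (rule integrable_bounded[where B = 1]) auto

lemma ACE_Y_eq_sum_strata:
  "ACE_Y M R Y1 Y0 r = (\<Sum>u\<in>UNIV. pi_s M R S1 S0 u r * ACE_stratum M R S1 S0 Y1 Y0 u r)"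
proof -
  have "integrable M (\<lambda>w. of_bool (Y1 w) - of_bool (Y0 w) :: real)"
    by (rule integrable_bounded[where B = 1]) auto
  then show ?thesis
    by (simp add: ACE_Y_def ACE_stratum_def cond_ev_exp_trial_strata)
qed

lemma cond_ev_exp_trial_effect_stratum:
  "cond_ev_exp M (trial_ev M R r) (\<lambda>w. (of_bool (Y1 w) - of_bool (Y0 w)) * of_bool ((S1 w, S0 w) = u))
     = pi_s M R S1 S0 u r * ACE_stratum M R S1 S0 Y1 Y0 u r"
proof -
  have "pi_s M R S1 S0 v r
          * cond_ev_exp M (stratum_ev M R S1 S0 v r) (\<lambda>w. (of_bool (Y1 w) - of_bool (Y0 w)) * of_bool ((S1 w, S0 w) = u))
        = (if v = u then pi_s M R S1 S0 u r * ACE_stratum M R S1 S0 Y1 Y0 u r else 0)" for v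
  proof (cases "v = u")
    case True
    then show ?thesis
      unfolding ACE_stratum_def by (auto simp: stratum_ev_def intro!: arg_cong2[where f = "(*)"] cond_ev_exp_cong)
  next
    case False
    then show ?thesis
      using pi_s_mult_cond_ev_exp_const_on_stratum[where c = 0] by (auto simp: stratum_ev_def)
  qed
  then show ?thesis
    by (simp add: cond_ev_exp_trial_strata integrable_effect_indicator_stratum)
qed

lemma causal_necessity_iff:
  "causal_necessity M R S1 S0 Y1 Y0 r \<longleftrightarrow>
     pi_s M R S1 S0 (True, True) r * ACE_stratum M R S1 S0 Y1 Y0 (True, True) r = 0 \<and>
     pi_s M R S1 S0 (False, False) r * ACE_stratum M R S1 S0 Y1 Y0 (False, False) r = 0"
  by (simp add: causal_necessity_def cond_ev_exp_trial_effect_stratum)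

end

lemma mixture_effect_bounds:
  fixes x z a b :: real
  assumes "0 \<le> x" "0 \<le> z" "x + z \<le> 1"
  shows "if a + b \<ge> 0
           then (x - z) * a \<le> x * a + z * b \<and> x * a + z * b \<le> (a + b) / 2 + (x - z) * (a - b) / 2
           else (a + b) / 2 + (x - z) * (a - b) / 2 \<le> x * a + z * b \<and> x * a + z * b \<le> (x - z) * a"
proof -
  have lower_gap: "x * a + z * b - (x - z) * a = z * (a + b)"
    by (simp add: algebra_simps)
  have upper_gap: "(a + b) / 2 + (x - z) * (a - b) / 2 - (x * a + z * b) = (1 - x - z) / 2 * (a + b)"
    by (simp add: field_simps)
  have slack: "0 \<le> (1 - x - z) / 2"
    using assms(3) by simp
  show ?thesis
  proof (cases "a + b \<ge> 0")
    case True
    have "0 \<le> z * (a + b)" "0 \<le> (1 - x - z) / 2 * (a + b)"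
      using True assms(2) slack by simp_all
    with lower_gap upper_gap show ?thesis
      unfolding if_P[OF True] by linarith
  next
    case False
    have "z * (a + b) \<le> 0" "(1 - x - z) / 2 * (a + b) \<le> 0"
      using False assms(2) slack by (simp_all add: mult_nonneg_nonpos)
    with lower_gap upper_gap show ?thesis
      unfolding if_not_P[OF False] by linarith
  qed
qed

theorem proposition3:
  fixes M :: "'a measure" and R :: "'a \<Rightarrow> 'r" and r :: 'r
    and S1 S0 Y1 Y0 :: "'a \<Rightarrow> bool"
  assumes "prob_space M"
    and "{w \<in> space M. R w = r} \<in> sets M"
    and "S1 \<in> measurable M (count_space UNIV)" and "S0 \<in> measurable M (count_space UNIV)"
    and "Y1 \<in> measurable M (count_space UNIV)" and "Y0 \<in> measurable M (count_space UNIV)"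
    and "causal_necessity M R S1 S0 Y1 Y0 r"
  shows
    "(pi_s M R S1 S0 (False, True) r = 0 \<and> pi_s M R S1 S0 (True, False) r > 0 \<longrightarrow>
        ACE_Y M R Y1 Y0 r = ACE_S M R S1 S0 r * ACE_stratum M R S1 S0 Y1 Y0 (True, False) r)
     \<and>
     (pi_s M R S1 S0 (True, False) r > 0 \<and> pi_s M R S1 S0 (False, True) r > 0
        \<and> ACE_S M R S1 S0 r > 0 \<longrightarrow>
       (let a = ACE_stratum M R S1 S0 Y1 Y0 (True, False) r;
            b = ACE_stratum M R S1 S0 Y1 Y0 (False, True) r;
            s = ACE_S M R S1 S0 r;
            y = ACE_Y M R Y1 Y0 r
        in if a + b \<ge> 0
           then s * a \<le> y \<and> y \<le> (a + b) / 2 + s * (a - b) / 2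
           else (a + b) / 2 + s * (a - b) / 2 \<le> y \<and> y \<le> s * a))"
proof -
  interpret prob_space M by fact
  interpret trial_potential_outcomes M R r S1 S0 Y1 Y0
    by unfold_locales (fact assms)+
  define a where "a = ACE_stratum M R S1 S0 Y1 Y0 (True, False) r"
  define b where "b = ACE_stratum M R S1 S0 Y1 Y0 (False, True) r"
  define x where "x = pi_s M R S1 S0 (True, False) r"
  define z where "z = pi_s M R S1 S0 (False, True) r"
  have necessity:
    "pi_s M R S1 S0 (True, True) r * ACE_stratum M R S1 S0 Y1 Y0 (True, True) r = 0"
    "pi_s M R S1 S0 (False, False) r * ACE_stratum M R S1 S0 Y1 Y0 (False, False) r = 0"
    using assms(7) by (simp_all only: causal_necessity_iff)
  have Y: "ACE_Y M R Y1 Y0 r = x * a + z * b"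
    unfolding ACE_Y_eq_sum_strata sum_UNIV_bool_pair necessity a_def b_def x_def z_def by simp
  have S: "ACE_S M R S1 S0 r = x - z"
    by (simp add: ACE_S_eq_pi_s_diff x_def z_def)
  have weights: "0 \<le> x" "0 \<le> z" "x + z \<le> 1"
    using sum_pi_s_le_one pi_s_nonneg[of M R S1 S0 _ r]
    unfolding sum_UNIV_bool_pair x_def z_def by (smt (verit))+
  show ?thesis
    unfolding Let_def Y S a_def[symmetric] b_def[symmetric] x_def[symmetric] z_def[symmetric]
    using mixture_effect_bounds[OF weights, of a b] by simp
qed

end
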